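(* Let $\langle r_n\rangle_{n=1}^\infty$ be a sequence in $\mathbb{N}$ and let $U=\bigcup_{n=1}^\infty\mathcal{P}_n({}^{r_n}\mathbb{N})$. Then: (i) there is a family $\{B_\alpha:\alpha<2^\omega\}$ of infinite subsets of $U$ with $B_\alpha\cap B_\beta$ finite for all $\alpha<\beta<2^\omega$, such that for every $\alpha<2^\omega$ and every $L\in U$ there exist $L'\in B_\alpha$ and $a\in\mathbb{N}$ with $L'=L+a$; (ii) there is a family $\{B_\alpha:\alpha<\omega\}$ of pairwise disjoint infinite subsets of $U$ such that for every $\alpha<\omega$ and every $L\in U$ there exist $L'\in B_\alpha$ and $a\in\mathbb{N}$ with $L'=L+a$.
   Context: $\mathbb{N}=\{1,2,\dots\}$. For a set $X$ and $n\in\mathbb{N}$, $\mathcal{P}_n(X)$ is the set of subsets of $X$ of size $n$, and ${}^{m}X$ is the set of sequences of length $m$ in $X$ (functions $\{1,\dots,m\}\to X$). For $f\in{}^m\mathbb{N}$ and $a\in\mathbb{Z}$, $f+a$ is the function $t\mapsto f(t)+a$, and for $L\subseteq{}^m\mathbb{N}$, $L+a=\{f+a: f\in L\}$. *)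

theory Defs
  imports Main
begin

text \<open>Sequences of length m in N = {1,2,...}, represented as lists of length m
  with all entries positive (entry i of the list is the value at position i+1).\<close>
definition seqs :: "nat \<Rightarrow> nat list set" where
  "seqs m = {xs. length xs = m \<and> (\<forall>x\<in>set xs. 1 \<le> x)}"

definition Pn :: "nat \<Rightarrow> 'a set \<Rightarrow> 'a set set" where
  "Pn n X = {L. L \<subseteq> X \<and> finite L \<and> card L = n}"

definition shift_seq :: "nat list \<Rightarrow> nat \<Rightarrow> nat list" where
  "shift_seq f a = map (\<lambda>x. x + a) f"

definition shift_set :: "nat list set \<Rightarrow> nat \<Rightarrow> nat list set" where
  "shift_set L a = (\<lambda>f. shift_seq f a) ` L"

definition Ufam :: "(nat \<Rightarrow> nat) \<Rightarrow> nat list set set" where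
  "Ufam r = (\<Union>n\<in>{1..}. Pn n (seqs (r n)))"

end

theory Submission
  imports Defs "HOL-Library.Countable" "HOL-Library.Nat_Bijection" "HOL-Library.Infinite_Set"
begin

text \<open>Every L \<in> U is a translate M + c of a set M whose least entry is 1, with c determined
  by the least entry of L. Fix an injective coding of finite sets by natural numbers and, for
  S \<subseteq> \<nat>, let B(S) consist of the translates M + h of such M with h \<in> S and code M \<le> h.
  If S is infinite, B(S) is infinite and contains a translate of every L \<in> U (take h \<in> S large).
  Since a member of B(S) determines its h, B(S) \<inter> B(S') = B(S \<inter> S'), and the code bound makes
  B(S) finite for finite S. So both families are images under B of families of infinite subsets
  of \<nat>: the almost disjoint sets of codes of initial segments A \<inter> {..<n} of the sets A \<subseteq> \<nat>,
  and the disjoint columns of the pairing function.\<close>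

definition entries :: "nat list set \<Rightarrow> nat set" where
  "entries M = (\<Union>f\<in>M. set f)"

definition min_entry :: "nat list set \<Rightarrow> nat" where
  "min_entry M = Min (entries M)"

definition finset_code :: "'a::countable set \<Rightarrow> nat" where
  "finset_code M = set_encode (to_nat ` M)"

lemma inj_on_finset_code: "inj_on finset_code (Collect finite)"
  unfolding finset_code_def
  by (rule inj_onI) (simp add: set_encode_eq inj_image_eq_iff)

lemma finite_finset_code_le: "finite {M :: 'a::countable set. finite M \<and> finset_code M \<le> b}"
  by (rule inj_on_finite[OF inj_on_subset[OF inj_on_finset_code], of _ "{..b}"]) auto

lemma inj_shift_seq: "inj (\<lambda>f. shift_seq f c)"
  unfolding shift_seq_def by (rule inj_mapI) (auto simp: inj_def)

lemma shift_set_shift_set: "shift_set (shift_set M a) b = shift_set M (a + b)"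
  unfolding shift_set_def shift_seq_def by (auto simp: image_image add.assoc comp_def)

lemma card_shift_set: "card (shift_set M c) = card M"
  unfolding shift_set_def by (rule card_image[OF inj_on_subset[OF inj_shift_seq subset_UNIV]])

lemma finite_shift_set_iff: "finite (shift_set M c) \<longleftrightarrow> finite M"
  unfolding shift_set_def by (rule finite_image_iff[OF inj_on_subset[OF inj_shift_seq subset_UNIV]])

lemma entries_shift_set: "entries (shift_set M c) = (\<lambda>x. x + c) ` entries M"
  unfolding entries_def shift_set_def shift_seq_def by auto

lemma min_entry_shift_set:
  assumes "finite M" "entries M \<noteq> {}"
  shows "min_entry (shift_set M c) = min_entry M + c"
proof -
  have "finite (entries M)" using assms(1) unfolding entries_def by auto
  then show ?thesis
    unfolding min_entry_def entries_shift_set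
    using assms(2) by (simp add: mono_Min_commute[symmetric] mono_def)
qed

lemma shift_set_unshift:
  assumes "\<forall>x\<in>entries L. c \<le> x"
  shows "shift_set (map (\<lambda>x. x - c) ` L) c = L"
proof -
  have "shift_seq (map (\<lambda>x. x - c) f) c = f" if "f \<in> L" for f
    using assms that unfolding entries_def shift_seq_def by (auto intro: map_idI)
  then show ?thesis
    unfolding shift_set_def image_image by (auto simp: image_iff)
qed

lemma Ufam_entries_pos: "M \<in> Ufam r \<Longrightarrow> x \<in> entries M \<Longrightarrow> 1 \<le> x"
  unfolding Ufam_def Pn_def seqs_def entries_def by auto

lemma Ufam_finite: "M \<in> Ufam r \<Longrightarrow> finite M"
  unfolding Ufam_def Pn_def by auto

lemma Ufam_entries_nonempty:
  assumes "\<forall>n\<ge>1. 1 \<le> r n" and "M \<in> Ufam r"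
  shows "entries M \<noteq> {}"
proof -
  from assms(2) obtain n where n: "n \<ge> 1" "M \<subseteq> seqs (r n)" "card M = n"
    unfolding Ufam_def Pn_def by auto
  then obtain f where f: "f \<in> M" by fastforce
  with n(2) have "length f = r n" unfolding seqs_def by auto
  with assms(1) n(1) have "f \<noteq> []" by force
  with f show ?thesis unfolding entries_def by auto
qed

lemma Ufam_shift_set_iff:
  assumes "\<forall>x\<in>entries M. 1 \<le> x"
  shows "shift_set M c \<in> Ufam r \<longleftrightarrow> M \<in> Ufam r"
proof -
  have "shift_set M c \<subseteq> seqs m \<longleftrightarrow> M \<subseteq> seqs m" for m
    using assms unfolding shift_set_def shift_seq_def seqs_def entries_def
    by (auto, meson trans_le_add1)
  then show ?thesis
    unfolding Ufam_def Pn_def by (simp add: card_shift_set finite_shift_set_iff)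
qed

lemma shift_set_Ufam: "M \<in> Ufam r \<Longrightarrow> shift_set M c \<in> Ufam r"
  using Ufam_shift_set_iff Ufam_entries_pos by blast

lemma Ufam_normal_form:
  assumes r: "\<forall>n\<ge>1. 1 \<le> r n" and L: "L \<in> Ufam r"
  shows "\<exists>M. M \<in> Ufam r \<and> min_entry M = 1 \<and> L = shift_set M (min_entry L - 1)"
proof -
  define c where "c = min_entry L - 1"
  define M where "M = map (\<lambda>x. x - c) ` L"
  have fin: "finite (entries L)"
    using Ufam_finite[OF L] unfolding entries_def by auto
  have "min_entry L \<in> entries L"
    unfolding min_entry_def using fin Ufam_entries_nonempty[OF r L] by simp
  then have "1 \<le> min_entry L" using Ufam_entries_pos[OF L] by blast
  moreover have "min_entry L \<le> x" if "x \<in> entries L" for x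
    unfolding min_entry_def using fin that by simp
  ultimately have above_c: "\<forall>x\<in>entries L. c + 1 \<le> x" unfolding c_def by fastforce
  then have LM: "L = shift_set M c"
    using shift_set_unshift[of L c] unfolding M_def by fastforce
  have "\<forall>x\<in>entries M. 1 \<le> x"
    using above_c unfolding M_def entries_def by fastforce
  with L LM have MU: "M \<in> Ufam r" using Ufam_shift_set_iff by blast
  have "min_entry L = min_entry M + c"
    using LM min_entry_shift_set Ufam_finite[OF MU] Ufam_entries_nonempty[OF r MU] by simp
  then have "min_entry M = 1" using \<open>1 \<le> min_entry L\<close> unfolding c_def by simp
  with MU LM show ?thesis unfolding c_def by blast
qed

definition shifted_copies :: "(nat \<Rightarrow> nat) \<Rightarrow> nat set \<Rightarrow> nat list set set" where
  "shifted_copies r S =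
     {shift_set M h | M h. M \<in> Ufam r \<and> min_entry M = 1 \<and> h \<in> S \<and> finset_code M \<le> h}"

lemma shifted_copies_empty [simp]: "shifted_copies r {} = {}"
  unfolding shifted_copies_def by simp

lemma shifted_copies_subset_Ufam: "shifted_copies r S \<subseteq> Ufam r"
  unfolding shifted_copies_def using shift_set_Ufam by auto

lemma min_entry_shift_set_normal:
  assumes "\<forall>n\<ge>1. 1 \<le> r n" "M \<in> Ufam r" "min_entry M = 1"
  shows "min_entry (shift_set M h) = h + 1"
  using assms min_entry_shift_set[OF Ufam_finite Ufam_entries_nonempty] by simp

lemma shifted_copies_Int:
  assumes r: "\<forall>n\<ge>1. 1 \<le> r n"
  shows "shifted_copies r S \<inter> shifted_copies r S' = shifted_copies r (S \<inter> S')"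
proof
  show "shifted_copies r S \<inter> shifted_copies r S' \<subseteq> shifted_copies r (S \<inter> S')"
  proof
    fix L assume L: "L \<in> shifted_copies r S \<inter> shifted_copies r S'"
    then obtain M h where M: "L = shift_set M h" "M \<in> Ufam r" "min_entry M = 1"
        "h \<in> S" "finset_code M \<le> h"
      unfolding shifted_copies_def by blast
    from L obtain M' h' where M': "L = shift_set M' h'" "M' \<in> Ufam r" "min_entry M' = 1"
        "h' \<in> S'"
      unfolding shifted_copies_def by blast
    have "h + 1 = h' + 1"
      using M M' min_entry_shift_set_normal[OF r] by metis
    with M M'(4) show "L \<in> shifted_copies r (S \<inter> S')"
      unfolding shifted_copies_def by auto
  qed
qed (auto simp: shifted_copies_def)

lemma finite_shifted_copies:
  assumes "finite S"
  shows "finite (shifted_copies r S)"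
proof (rule finite_subset)
  show "shifted_copies r S \<subseteq>
      (\<Union>h\<in>S. (\<lambda>M. shift_set M h) ` {M. finite M \<and> finset_code M \<le> h})"
    unfolding shifted_copies_def by (auto dest: Ufam_finite)
  show "finite \<dots>" using assms by (simp add: finite_finset_code_le)
qed

lemma infinite_shifted_copies:
  assumes r: "\<forall>n\<ge>1. 1 \<le> r n" and S: "infinite S"
  shows "infinite (shifted_copies r S)"
proof -
  define M where "M = {replicate (r 1) (1::nat)}"
  have MU: "M \<in> Ufam r" unfolding M_def Ufam_def Pn_def seqs_def by auto
  have "entries M = {1}" unfolding M_def entries_def using r by auto
  then have min_M: "min_entry M = 1" unfolding min_entry_def by simp
  define T where "T = {h \<in> S. finset_code M \<le> h}"
  have "S \<subseteq> T \<union> {..<finset_code M}" unfolding T_def by auto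
  with S have "infinite T" using finite_subset by blast
  moreover have "inj_on (shift_set M) T"
    using min_entry_shift_set_normal[OF r MU min_M] by (metis add_right_cancel inj_onI)
  moreover have "shift_set M ` T \<subseteq> shifted_copies r S"
    unfolding shifted_copies_def T_def using MU min_M by auto
  ultimately show ?thesis by (meson finite_imageD finite_subset)
qed

lemma shifted_copies_contains_shift:
  assumes r: "\<forall>n\<ge>1. 1 \<le> r n" and S: "infinite S" and L: "L \<in> Ufam r"
  shows "\<exists>L'\<in>shifted_copies r S. \<exists>a\<ge>1. L' = shift_set L a"
proof -
  obtain M where M: "M \<in> Ufam r" "min_entry M = 1" "L = shift_set M (min_entry L - 1)"
    using Ufam_normal_form[OF r L] by blast
  obtain h where h: "h \<in> S" "h > finset_code M + min_entry L"
    using S by (meson infinite_nat_iff_unbounded)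
  have "shift_set M h \<in> shifted_copies r S"
    unfolding shifted_copies_def using M h by force
  moreover have "shift_set M h = shift_set L (h - (min_entry L - 1))"
    using M(3) h(2) shift_set_shift_set[of M "min_entry L - 1"] by simp
  moreover have "h - (min_entry L - 1) \<ge> 1" using h(2) by simp
  ultimately show ?thesis by blast
qed

definition branch_codes :: "nat set \<Rightarrow> nat set" where
  "branch_codes A = range (\<lambda>n. prod_encode (n, set_encode (A \<inter> {..<n})))"

lemma infinite_branch_codes: "infinite (branch_codes A)"
  unfolding branch_codes_def by (rule range_inj_infinite) (auto simp: inj_def)

lemma finite_branch_codes_Int:
  assumes "A \<noteq> B"
  shows "finite (branch_codes A \<inter> branch_codes B)"
proof -
  obtain m where m: "m \<in> A \<longleftrightarrow> m \<notin> B" using assms by blast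
  have "branch_codes A \<inter> branch_codes B \<subseteq>
      (\<lambda>n. prod_encode (n, set_encode (A \<inter> {..<n}))) ` {..m}"
  proof
    fix x assume "x \<in> branch_codes A \<inter> branch_codes B"
    then obtain n where x: "x = prod_encode (n, set_encode (A \<inter> {..<n}))"
        and "set_encode (A \<inter> {..<n}) = set_encode (B \<inter> {..<n})"
      unfolding branch_codes_def by auto
    then have "A \<inter> {..<n} = B \<inter> {..<n}" by (simp add: set_encode_eq)
    with m have "n \<le> m" by (metis IntI Int_iff lessThan_iff not_le)
    with x show "x \<in> (\<lambda>n. prod_encode (n, set_encode (A \<inter> {..<n}))) ` {..m}" by auto
  qed
  then show ?thesis using finite_subset by blast
qed

definition column :: "nat \<Rightarrow> nat set" where
  "column k = range (\<lambda>j. prod_encode (k, j))"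

lemma infinite_column: "infinite (column k)"
  unfolding column_def by (rule range_inj_infinite) (auto simp: inj_def)

lemma disjoint_columns: "k \<noteq> k' \<Longrightarrow> column k \<inter> column k' = {}"
  unfolding column_def by auto

theorem lemma3p1:
  fixes r :: "nat \<Rightarrow> nat"
  assumes "\<forall>n\<ge>1. 1 \<le> r n"
  shows "(\<exists>B :: nat set \<Rightarrow> nat list set set.
            (\<forall>\<alpha>. B \<alpha> \<subseteq> Ufam r \<and> infinite (B \<alpha>)) \<and>
            (\<forall>\<alpha> \<beta>. \<alpha> \<noteq> \<beta> \<longrightarrow> finite (B \<alpha> \<inter> B \<beta>)) \<and>
            (\<forall>\<alpha>. \<forall>L\<in>Ufam r. \<exists>L'\<in>B \<alpha>. \<exists>a\<ge>1. L' = shift_set L a))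
       \<and> (\<exists>B :: nat \<Rightarrow> nat list set set.
            (\<forall>\<alpha>. B \<alpha> \<subseteq> Ufam r \<and> infinite (B \<alpha>)) \<and>
            (\<forall>\<alpha> \<beta>. \<alpha> \<noteq> \<beta> \<longrightarrow> B \<alpha> \<inter> B \<beta> = {}) \<and>
            (\<forall>\<alpha>. \<forall>L\<in>Ufam r. \<exists>L'\<in>B \<alpha>. \<exists>a\<ge>1. L' = shift_set L a))"
proof -
  have almost_disjoint:
    "finite (shifted_copies r (branch_codes A) \<inter> shifted_copies r (branch_codes A'))"
    if "A \<noteq> A'" for A A'
    using that by (simp add: shifted_copies_Int[OF assms] finite_shifted_copies finite_branch_codes_Int)
  have disjoint: "shifted_copies r (column k) \<inter> shifted_copies r (column k') = {}"
    if "k \<noteq> k'" for k k'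
    using that by (simp add: shifted_copies_Int[OF assms] disjoint_columns)
  show ?thesis
    by (intro conjI allI impI ballI exI[of _ "\<lambda>A. shifted_copies r (branch_codes A)"]
        exI[of _ "\<lambda>k. shifted_copies r (column k)"])
      (simp_all add: almost_disjoint disjoint shifted_copies_subset_Ufam
        infinite_shifted_copies[OF assms] shifted_copies_contains_shift[OF assms]
        infinite_branch_codes infinite_column del: One_nat_def)
qed

end
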